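(* Let $\mathbf R_s\in\mathcal R([e,\ell];\theta_s)$ for all $s\in\mathcal S$. Consider the mixed-integer linear program: minimize $\delta$ over $\delta\ge 0$, $\bm a_s\in\mathcal X(\mathbf R_s,[e,\ell];\theta_s)$ ($s\in\mathcal S$), and, for each $i\in V_{\mathrm{disc}}$, variables $\bar\mu_i,\underline\mu_i\ge0$ and $z_{ib}\in\{0,1\}$ ($b=1,\dots,N_i$), subject to: $\sum_{b=1}^{N_i}z_{ib}=1$ for each $i\in V_{\mathrm{disc}}$; for all $i\in V_{\mathrm{disc}}$, $s\in\mathcal S$, $b\in\{1,\dots,N_i\}$: $z_{ib}=1\Rightarrow \bar\mu_i\ge a_{si}-\bar y_{ib}$ and $z_{ib}=1\Rightarrow\underline\mu_i\ge \underline y_{ib}-a_{si}$; $\delta\ge a_{s_1i}-a_{s_2i}-w_i$ for all $i\in V_{\mathrm{cont}}$ and $(s_1,s_2)\in\mathcal S\times\mathcal S$; and $\delta\ge\sum_{i\in V_{\mathrm{disc}}}(\bar\mu_i+\underline\mu_i)$. Then this problem attains its minimum, and its optimal value equals $0$ if and only if there exist $\bm a_s\in\mathcal X(\mathbf R_s,[e,\ell];\theta_s)$, $s\in\mathcal S$, satisfying: (i) for every $i\in V_{\mathrm{cont}}$ and $\beta\in\mathbb R$: either $a_{si}\le\beta+w_i/2$ for all $s$, or $a_{si}\ge\beta-w_i/2$ for all $s$; and (ii) for every $i\in V_{\mathrm{disc}}$ and $b\in\{1,\dots,N_i-1\}$: either $a_{si}\le\bar y_{ib}$ for all $s$, or $a_{si}\ge\underline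 y_{i,b+1}$ for all $s$.
   Context: Let $G=(V,A)$ be a directed graph with $V=\{0,1,\dots,n\}$; node $0$ is the depot and $V_C=V\setminus\{0\}$ is the set of customers. The depot has operating window $[e_0,\ell_0]$, vehicles have capacity $Q$, and each customer $i\in V_C$ has an exogenous time window $[e_i,\ell_i]$. A vector of operational parameters $\theta$ consists of arc costs $c_{ij}\ge 0$ and arc travel times $t_{ij}\ge0$ for $(i,j)\in A$, and demands $q_i\ge 0$ and service times $u_i\ge 0$ for $i\in V_C$. The customer set is partitioned as $V_C=V_{\mathrm{cont}}\cup V_{\mathrm{disc}}$ (disjoint). For $i\in V_{\mathrm{cont}}$ a width $w_i\ge0$ with $e_i\le \ell_i-w_i$ is given and $TW_i=\{[y,y+w_i]: e_i\le y\le \ell_i-w_i\}$. For $i\in V_{\mathrm{disc}}$, $TW_i=\{[\underline y_{i1},\bar y_{i1}],\dots,[\underline y_{iN_i},\bar y_{iN_i}]\}$ is a finite set of intervals with $\underline y_{ib}\le\bar y_{ib}$, none contained in another, ordered so that $e_i=\underline y_{i1}<\dots<\underline y_{iN_i}$ and $\bar y_{i1}<\dots<\bar y_{iN_i}=\ell_i$. A route set $\mathbf R=(R_1,\dots,R_m)$ is a collection of pairwise disjoint nonempty sequences $R_k=(R_{k,1},\dots,R_{k,n_k})$ of distinct customers (every customer with positive demand appearing in exactly one sequence). For a vector $\tau=(\tau_1,\dots,\tau_n)$ of closed intervals, $\mathcal X(\mathbf R,\tau;\theta)$ is the set of $\bm a\in\mathbb R^n_{\ge0}$ with: $a_{R_{k,1}}\ge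 e_0+t_{0,R_{k,1}}$ for all $k$; $a_{R_{k,l+1}}-a_{R_{k,l}}\ge t_{R_{k,l},R_{k,l+1}}+u_{R_{k,l}}$ for all $k$ and $1\le l\le n_k-1$; $a_{R_{k,n_k}}\le \ell_0-t_{R_{k,n_k},0}-u_{R_{k,n_k}}$ for all $k$; and $a_i\in\tau_i$ for all $i\in V_C$. We write $\mathbf R\in\mathcal R(\tau;\theta)$ if $\sum_{i\in R_k}q_i\le Q$ for every $k$ and $\mathcal X(\mathbf R,\tau;\theta)\neq\emptyset$. Finitely many scenarios $\theta_1,\dots,\theta_S$ are given, $\mathcal S=\{1,\dots,S\}$. $[e,\ell]$ denotes the vector $([e_1,\ell_1],\dots,[e_n,\ell_n])$, and $a_{si}$ denotes the $i$-th component of $\bm a_s$. *)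

theory Defs
  imports Complex_Main
begin

text \<open>Operational parameters theta of one scenario: arc costs c, arc travel times t,
  demands q, service times u.  Node 0 is the depot, customers are 1..n.\<close>
record vrp_params =
  arc_cost :: "nat \<Rightarrow> nat \<Rightarrow> real"
  travel   :: "nat \<Rightarrow> nat \<Rightarrow> real"
  demand   :: "nat \<Rightarrow> real"
  service  :: "nat \<Rightarrow> real"

text \<open>Scenario-independent instance data.  For discrete customers i, the candidate
  windows are [ylo i b, yhi i b] for b = 1..nwin i.\<close>
record vrp_inst =
  ncust   :: nat
  depot_e :: real
  depot_l :: real
  cap     :: real
  tw_e    :: "nat \<Rightarrow> real"
  tw_l    :: "nat \<Rightarrow> real"
  Vcont   :: "nat set"
  Vdisc   :: "nat set"
  width   :: "nat \<Rightarrow> real"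
  nwin    :: "nat \<Rightarrow> nat"
  ylo     :: "nat \<Rightarrow> nat \<Rightarrow> real"
  yhi     :: "nat \<Rightarrow> nat \<Rightarrow> real"

definition customers :: "vrp_inst \<Rightarrow> nat set" where
  "customers I = {1..ncust I}"

definition wf_inst :: "vrp_inst \<Rightarrow> bool" where
  "wf_inst I \<longleftrightarrow>
     Vcont I \<inter> Vdisc I = {} \<and> Vcont I \<union> Vdisc I = customers I \<and>
     (\<forall>i\<in>Vcont I. 0 \<le> width I i \<and> tw_e I i \<le> tw_l I i - width I i) \<and>
     (\<forall>i\<in>Vdisc I. 1 \<le> nwin I i \<and>
        (\<forall>b\<in>{1..nwin I i}. ylo I i b \<le> yhi I i b) \<and>
        (\<forall>b\<in>{1..<nwin I i}. ylo I i b < ylo I i (b+1) \<and> yhi I i b < yhi I i (b+1)) \<and>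
        (\<forall>b\<in>{1..nwin I i}. \<forall>b'\<in>{1..nwin I i}. b \<noteq> b' \<longrightarrow>
            \<not> {ylo I i b .. yhi I i b} \<subseteq> {ylo I i b' .. yhi I i b'}) \<and>
        tw_e I i = ylo I i 1 \<and> yhi I i (nwin I i) = tw_l I i)"

definition params_ok :: "vrp_inst \<Rightarrow> vrp_params \<Rightarrow> bool" where
  "params_ok I th \<longleftrightarrow>
     (\<forall>i\<le>ncust I. \<forall>j\<le>ncust I. i \<noteq> j \<longrightarrow> 0 \<le> arc_cost th i j \<and> 0 \<le> travel th i j) \<and>
     (\<forall>i\<in>customers I. 0 \<le> demand th i \<and> 0 \<le> service th i)"

definition route_set :: "vrp_inst \<Rightarrow> vrp_params \<Rightarrow> nat list list \<Rightarrow> bool" where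
  "route_set I th R \<longleftrightarrow>
     (\<forall>r\<in>set R. r \<noteq> [] \<and> distinct r \<and> set r \<subseteq> customers I) \<and>
     (\<forall>k<length R. \<forall>k'<length R. k \<noteq> k' \<longrightarrow> set (R!k) \<inter> set (R!k') = {}) \<and>
     (\<forall>i\<in>customers I. 0 < demand th i \<longrightarrow> (\<exists>r\<in>set R. i \<in> set r))"

text \<open>The set X(R, tau; theta); tau_i = [lo i, hi i].  Arrival vectors are functions
  nat => real supported on the customers 1..n.\<close>
definition Xset :: "vrp_inst \<Rightarrow> vrp_params \<Rightarrow> nat list list \<Rightarrow>
                    (nat \<Rightarrow> real) \<Rightarrow> (nat \<Rightarrow> real) \<Rightarrow> (nat \<Rightarrow> real) set" where
  "Xset I th R lo hi = {a.
     (\<forall>i. i \<notin> customers I \<longrightarrow> a i = 0) \<and>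
     (\<forall>i\<in>customers I. 0 \<le> a i) \<and>
     (\<forall>r\<in>set R.
        depot_e I + travel th 0 (hd r) \<le> a (hd r) \<and>
        (\<forall>l. l + 1 < length r \<longrightarrow>
             travel th (r!l) (r!(l+1)) + service th (r!l) \<le> a (r!(l+1)) - a (r!l)) \<and>
        a (last r) \<le> depot_l I - travel th (last r) 0 - service th (last r)) \<and>
     (\<forall>i\<in>customers I. lo i \<le> a i \<and> a i \<le> hi i)}"

definition feasible_routes :: "vrp_inst \<Rightarrow> vrp_params \<Rightarrow> nat list list \<Rightarrow>
                    (nat \<Rightarrow> real) \<Rightarrow> (nat \<Rightarrow> real) \<Rightarrow> bool" where
  "feasible_routes I th R lo hi \<longleftrightarrow>
     route_set I th R \<and> (\<forall>r\<in>set R. (\<Sum>i\<in>set r. demand th i) \<le> cap I) \<and>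
     Xset I th R lo hi \<noteq> {}"

text \<open>Feasible set of the MILP; a point is (delta, a, mubar, mulow, z) with a s i = a_{si}.\<close>
definition milp_feasible :: "vrp_inst \<Rightarrow> nat \<Rightarrow> (nat \<Rightarrow> vrp_params) \<Rightarrow> (nat \<Rightarrow> nat list list) \<Rightarrow>
    (real \<times> (nat \<Rightarrow> nat \<Rightarrow> real) \<times> (nat \<Rightarrow> real) \<times> (nat \<Rightarrow> real) \<times> (nat \<Rightarrow> nat \<Rightarrow> real)) set" where
  "milp_feasible I S th R = {(d, a, mub, mul, z).
     0 \<le> d \<and>
     (\<forall>s\<in>{1..S}. a s \<in> Xset I (th s) (R s) (tw_e I) (tw_l I)) \<and>
     (\<forall>i\<in>Vdisc I. 0 \<le> mub i \<and> 0 \<le> mul i \<and>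
        (\<forall>b\<in>{1..nwin I i}. z i b \<in> {0, 1}) \<and>
        (\<Sum>b=1..nwin I i. z i b) = 1 \<and>
        (\<forall>s\<in>{1..S}. \<forall>b\<in>{1..nwin I i}.
            (z i b = 1 \<longrightarrow> a s i - yhi I i b \<le> mub i) \<and>
            (z i b = 1 \<longrightarrow> ylo I i b - a s i \<le> mul i))) \<and>
     (\<forall>i\<in>Vcont I. \<forall>s1\<in>{1..S}. \<forall>s2\<in>{1..S}. a s1 i - a s2 i - width I i \<le> d) \<and>
     (\<Sum>i\<in>Vdisc I. mub i + mul i) \<le> d}"

end

theory Submission
  imports Defs "HOL-Analysis.Analysis"
begin

text \<open>Once the arrival times \<open>a\<close> and the window \<open>c i\<close> selected for each discrete customer are
  fixed, the smallest feasible \<open>\<delta>\<close> is an explicit continuous function of \<open>a\<close>: a maximum of zero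
  and finitely many affine terms.  The arrival times range over a compact polyhedron and there
  are finitely many window selections, so this function attains a minimum, which is the minimum
  of the MILP.  Its value is \<open>0\<close> exactly when, in every scenario, the arrivals at a continuous
  customer lie within \<open>w\<^sub>i\<close> of each other and those at a discrete customer lie in one common
  window.  The first condition is (i) (take \<open>\<beta>\<close> the midpoint of two arrivals); the second is
  (ii) (take the first window that ends after all arrivals).\<close>

lemma compact_PiE_UNIV:
  fixes K :: "'a \<Rightarrow> 'b::topological_space set"
  assumes "\<And>i. compact (K i)"
  shows "compact (Pi\<^sub>E UNIV K)"
  using compactin_PiE[of "\<lambda>_. euclidean" UNIV K] assms
  by (simp add: euclidean_product_topology)

lemma continuous_on_entry [continuous_intros]:
  "continuous_on A (\<lambda>a :: 'a \<Rightarrow> 'b \<Rightarrow> 'c::topological_space. a s i)"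
  using continuous_on_product_then_coordinatewise[of A "\<lambda>a. a s" i]
    continuous_on_product_coordinates[of s] continuous_on_subset by blast

lemma continuous_attains_inf_finite_family:
  fixes f :: "'c \<Rightarrow> 'a::topological_space \<Rightarrow> 'b::linorder_topology"
  assumes "finite C" "C \<noteq> {}" "compact K" "K \<noteq> {}" "\<And>c. c \<in> C \<Longrightarrow> continuous_on K (f c)"
  shows "\<exists>c\<in>C. \<exists>x\<in>K. \<forall>c'\<in>C. \<forall>y\<in>K. f c x \<le> f c' y"
proof -
  obtain m where m: "\<And>c. c \<in> C \<Longrightarrow> m c \<in> K \<and> (\<forall>y\<in>K. f c (m c) \<le> f c y)"
    using continuous_attains_inf[OF assms(3,4) assms(5)] by metis
  define c where "c = arg_min_on (\<lambda>c. f c (m c)) C"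
  have "c \<in> C" "\<forall>c'\<in>C. f c (m c) \<le> f c' (m c')"
    using arg_min_if_finite[OF assms(1,2), of "\<lambda>c. f c (m c)"] unfolding c_def
    by (auto simp: not_less)
  then show ?thesis using m by (meson order_trans)
qed

definition pos_max :: "'a set \<Rightarrow> ('a \<Rightarrow> real) \<Rightarrow> real" where
  "pos_max A f = Max (insert 0 (f ` A))"

lemma pos_max_le_iff: "finite A \<Longrightarrow> pos_max A f \<le> d \<longleftrightarrow> 0 \<le> d \<and> (\<forall>x\<in>A. f x \<le> d)"
  by (simp add: pos_max_def)

lemma pos_max_nonneg: "finite A \<Longrightarrow> 0 \<le> pos_max A f"
  by (simp add: pos_max_def)

lemma pos_max_ge: "finite A \<Longrightarrow> x \<in> A \<Longrightarrow> f x \<le> pos_max A f"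
  by (simp add: pos_max_def)

lemma pos_max_cong: "(\<And>x. x \<in> A \<Longrightarrow> f x = g x) \<Longrightarrow> pos_max A f = pos_max A g"
  by (simp add: pos_max_def)

lemma continuous_on_pos_max [continuous_intros]:
  assumes "finite A" "\<And>x. x \<in> A \<Longrightarrow> continuous_on K (f x)"
  shows "continuous_on K (\<lambda>y. pos_max A (\<lambda>x. f x y))"
  using assms
proof (induction A rule: finite_induct)
  case empty
  then show ?case by (simp add: pos_max_def)
next
  case (insert x A)
  have "pos_max (insert x A) (\<lambda>x. f x y) = max (f x y) (pos_max A (\<lambda>x. f x y))" for y
    using insert.hyps by (cases "A = {}") (auto simp: pos_max_def max.left_commute max.commute)
  then show ?case
    by (simp only:) (intro continuous_on_max insert; simp)
qed

lemma pairwise_diff_le_iff_one_sided: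
  fixes x :: "'a \<Rightarrow> real"
  shows "(\<forall>s1\<in>A. \<forall>s2\<in>A. x s1 - x s2 \<le> w) \<longleftrightarrow>
    (\<forall>\<beta>. (\<forall>s\<in>A. x s \<le> \<beta> + w / 2) \<or> (\<forall>s\<in>A. \<beta> - w / 2 \<le> x s))"
proof
  assume diff: "\<forall>s1\<in>A. \<forall>s2\<in>A. x s1 - x s2 \<le> w"
  show "\<forall>\<beta>. (\<forall>s\<in>A. x s \<le> \<beta> + w / 2) \<or> (\<forall>s\<in>A. \<beta> - w / 2 \<le> x s)"
  proof (intro allI disjCI)
    fix \<beta> assume "\<not> (\<forall>s\<in>A. \<beta> - w / 2 \<le> x s)"
    then obtain s2 where "s2 \<in> A" "x s2 < \<beta> - w / 2" by force
    then show "\<forall>s\<in>A. x s \<le> \<beta> + w / 2" using diff by force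
  qed
next
  assume sided: "\<forall>\<beta>. (\<forall>s\<in>A. x s \<le> \<beta> + w / 2) \<or> (\<forall>s\<in>A. \<beta> - w / 2 \<le> x s)"
  show "\<forall>s1\<in>A. \<forall>s2\<in>A. x s1 - x s2 \<le> w"
  proof (intro ballI)
    fix s1 s2 assume "s1 \<in> A" "s2 \<in> A"
    then have "x s1 \<le> (x s1 + x s2) / 2 + w / 2 \<or> (x s1 + x s2) / 2 - w / 2 \<le> x s2"
      using sided by blast
    then show "x s1 - x s2 \<le> w" by argo
  qed
qed

lemma common_window_iff_one_sided:
  fixes lo hi :: "nat \<Rightarrow> real" and x :: "'a \<Rightarrow> real"
  assumes mono: "\<And>b. b \<in> {1..<N} \<Longrightarrow> lo b \<le> lo (b + 1) \<and> hi b \<le> hi (b + 1)"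
    and range: "\<And>s. s \<in> A \<Longrightarrow> lo 1 \<le> x s \<and> x s \<le> hi N"
    and "1 \<le> N"
  shows "(\<exists>k\<in>{1..N}. \<forall>s\<in>A. lo k \<le> x s \<and> x s \<le> hi k) \<longleftrightarrow>
    (\<forall>b\<in>{1..N - 1}. (\<forall>s\<in>A. x s \<le> hi b) \<or> (\<forall>s\<in>A. lo (b + 1) \<le> x s))"
proof
  assume "\<exists>k\<in>{1..N}. \<forall>s\<in>A. lo k \<le> x s \<and> x s \<le> hi k"
  then obtain k where k: "k \<in> {1..N}" "\<And>s. s \<in> A \<Longrightarrow> lo k \<le> x s \<and> x s \<le> hi k" by blast
  show "\<forall>b\<in>{1..N - 1}. (\<forall>s\<in>A. x s \<le> hi b) \<or> (\<forall>s\<in>A. lo (b + 1) \<le> x s)"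
  proof (intro ballI)
    fix b assume b: "b \<in> {1..N - 1}"
    show "(\<forall>s\<in>A. x s \<le> hi b) \<or> (\<forall>s\<in>A. lo (b + 1) \<le> x s)"
    proof (cases "k \<le> b")
      case True
      then have "hi k \<le> hi b"
        using lift_Suc_mono_le_ivl[of "{1..<N}" hi k b] mono k b by force
      then show ?thesis using k by force
    next
      case False
      then have "lo (b + 1) \<le> lo k"
        using lift_Suc_mono_le_ivl[of "{1..<N}" lo "b + 1" k] mono k b by force
      then show ?thesis using k by force
    qed
  qed
next
  assume sided: "\<forall>b\<in>{1..N - 1}. (\<forall>s\<in>A. x s \<le> hi b) \<or> (\<forall>s\<in>A. lo (b + 1) \<le> x s)"
  \<comment> \<open>\<open>k\<close> is the first window ending after all \<open>x s\<close>; separation at \<open>k - 1\<close> puts them after its start.\<close>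
  define below where "below b \<longleftrightarrow> 1 \<le> b \<and> (\<forall>s\<in>A. x s \<le> hi b)" for b
  define k where "k = (LEAST b. below b)"
  have "below N" using range \<open>1 \<le> N\<close> by (simp add: below_def)
  then have k: "below k" "k \<le> N"
    unfolding k_def by (auto intro: LeastI Least_le)
  have "lo k \<le> x s" if "s \<in> A" for s
  proof (cases "k = 1")
    case True
    then show ?thesis using range that by simp
  next
    case False
    then have "k - 1 \<in> {1..N - 1}" "\<not> below (k - 1)"
      using k not_less_Least[of "k - 1" below] unfolding k_def below_def by auto
    then have "\<forall>s\<in>A. lo (k - 1 + 1) \<le> x s"
      using sided unfolding below_def by auto
    moreover have "k - 1 + 1 = k" using \<open>k - 1 \<in> {1..N - 1}\<close> by auto
    ultimately show ?thesis using that by metis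
  qed
  with k show "\<exists>k\<in>{1..N}. \<forall>s\<in>A. lo k \<le> x s \<and> x s \<le> hi k"
    unfolding below_def by (meson atLeastAtMost_iff)
qed

lemma sum_01_eq_1_imp_ex:
  assumes "\<forall>b\<in>B. z b \<in> {0, 1::real}" "sum z B = 1"
  shows "\<exists>b\<in>B. z b = 1"
proof -
  have "\<not> (\<forall>b\<in>B. z b = 0)" using assms(2) by (metis sum.neutral zero_neq_one)
  with assms(1) show ?thesis by blast
qed

lemma wf_inst_finite:
  assumes "wf_inst I"
  shows "finite (Vcont I)" "finite (Vdisc I)"
  using assms unfolding wf_inst_def customers_def by (auto intro: finite_subset)

lemma Xset_bounds:
  "a \<in> Xset I th R lo hi \<Longrightarrow> i \<in> customers I \<Longrightarrow> lo i \<le> a i \<and> a i \<le> hi i"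
  by (simp add: Xset_def)

lemma closed_Xset: "closed (Xset I th R lo hi)"
  unfolding Xset_def Ball_def
  by (intro closed_Collect_conj closed_Collect_all closed_Collect_imp closed_Collect_le
        closed_Collect_eq continuous_intros continuous_on_product_coordinates ballI allI) auto

text \<open>Fixing the arrival vectors of indices outside \<open>{1..S}\<close> to zero makes this set bounded.\<close>
definition arrival_profiles :: "vrp_inst \<Rightarrow> nat \<Rightarrow> (nat \<Rightarrow> vrp_params) \<Rightarrow> (nat \<Rightarrow> nat list list) \<Rightarrow>
    (nat \<Rightarrow> nat \<Rightarrow> real) set" where
  "arrival_profiles I S th R = {a.
     (\<forall>s\<in>{1..S}. a s \<in> Xset I (th s) (R s) (tw_e I) (tw_l I)) \<and> (\<forall>s. s \<notin> {1..S} \<longrightarrow> a s = (\<lambda>_. 0))}"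

lemma compact_arrival_profiles: "compact (arrival_profiles I S th R)"
proof -
  define box where "box s i = (if s \<in> {1..S} \<and> i \<in> customers I then {tw_e I i..tw_l I i} else {0})"
    for s i
  have "closed {a. a s \<in> Xset I (th s) (R s) (tw_e I) (tw_l I)}" for s
    using closed_vimage[OF closed_Xset continuous_on_product_coordinates] by (simp add: vimage_def)
  then have "closed (arrival_profiles I S th R)"
    unfolding arrival_profiles_def Ball_def
    by (intro closed_Collect_conj closed_Collect_all closed_Collect_imp closed_Collect_eq
        continuous_on_product_coordinates) auto
  moreover have "compact (Pi\<^sub>E UNIV (\<lambda>s. Pi\<^sub>E UNIV (box s)))"
    unfolding box_def by (intro compact_PiE_UNIV) auto
  moreover have "arrival_profiles I S th R \<subseteq> Pi\<^sub>E UNIV (\<lambda>s. Pi\<^sub>E UNIV (box s))"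
  proof
    fix a assume a: "a \<in> arrival_profiles I S th R"
    have "a s i \<in> box s i" for s i
    proof (cases "s \<in> {1..S}")
      case True
      then show ?thesis using a by (auto simp: arrival_profiles_def box_def Xset_def)
    next
      case False
      then show ?thesis using a by (auto simp: arrival_profiles_def box_def)
    qed
    then show "a \<in> Pi\<^sub>E UNIV (\<lambda>s. Pi\<^sub>E UNIV (box s))" by (simp add: PiE_iff)
  qed
  ultimately show ?thesis
    by (metis compact_Int_closed inf.absorb_iff2)
qed

definition window_choices :: "vrp_inst \<Rightarrow> (nat \<Rightarrow> nat) set" where
  "window_choices I = Pi\<^sub>E (Vdisc I) (\<lambda>i. {1..nwin I i})"

definition late_slack :: "vrp_inst \<Rightarrow> nat \<Rightarrow> (nat \<Rightarrow> nat \<Rightarrow> real) \<Rightarrow> nat \<Rightarrow> nat \<Rightarrow> real" where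
  "late_slack I S a i b = pos_max {1..S} (\<lambda>s. a s i - yhi I i b)"

definition early_slack :: "vrp_inst \<Rightarrow> nat \<Rightarrow> (nat \<Rightarrow> nat \<Rightarrow> real) \<Rightarrow> nat \<Rightarrow> nat \<Rightarrow> real" where
  "early_slack I S a i b = pos_max {1..S} (\<lambda>s. ylo I i b - a s i)"

definition width_excess :: "vrp_inst \<Rightarrow> nat \<Rightarrow> (nat \<Rightarrow> nat \<Rightarrow> real) \<Rightarrow> real" where
  "width_excess I S a =
     pos_max (Vcont I \<times> {1..S} \<times> {1..S}) (\<lambda>(i, s1, s2). a s1 i - a s2 i - width I i)"

definition milp_value :: "vrp_inst \<Rightarrow> nat \<Rightarrow> (nat \<Rightarrow> nat) \<Rightarrow> (nat \<Rightarrow> nat \<Rightarrow> real) \<Rightarrow> real" where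
  "milp_value I S c a =
     max (width_excess I S a) (\<Sum>i\<in>Vdisc I. late_slack I S a i (c i) + early_slack I S a i (c i))"

text \<open>The cheapest feasible point once the arrival times \<open>a\<close> and the selected window \<open>c i\<close>
  of every discrete customer are fixed.\<close>
definition milp_point :: "vrp_inst \<Rightarrow> nat \<Rightarrow> (nat \<Rightarrow> nat) \<Rightarrow> (nat \<Rightarrow> nat \<Rightarrow> real) \<Rightarrow>
    real \<times> (nat \<Rightarrow> nat \<Rightarrow> real) \<times> (nat \<Rightarrow> real) \<times> (nat \<Rightarrow> real) \<times> (nat \<Rightarrow> nat \<Rightarrow> real)" where
  "milp_point I S c a = (milp_value I S c a, a, \<lambda>i. late_slack I S a i (c i),
     \<lambda>i. early_slack I S a i (c i), \<lambda>i b. if b = c i then 1 else 0)"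

lemma milp_point_feasible:
  assumes "finite (Vcont I)" "c \<in> window_choices I"
    and "\<forall>s\<in>{1..S}. a s \<in> Xset I (th s) (R s) (tw_e I) (tw_l I)"
  shows "milp_point I S c a \<in> milp_feasible I S th R"
proof -
  have finA: "finite (Vcont I \<times> {1..S} \<times> {1..S})" using assms(1) by simp
  have "a s1 i - a s2 i - width I i \<le> width_excess I S a"
    if "i \<in> Vcont I" "s1 \<in> {1..S}" "s2 \<in> {1..S}" for i s1 s2
    unfolding width_excess_def
    using pos_max_ge[OF finA, of "(i, s1, s2)" "\<lambda>(i, s1, s2). a s1 i - a s2 i - width I i"] that
    by simp
  moreover have "a s i - yhi I i b \<le> late_slack I S a i b" if "s \<in> {1..S}" for s i b
    unfolding late_slack_def using pos_max_ge[of "{1..S}" s "\<lambda>s. a s i - yhi I i b"] that by simp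
  moreover have "ylo I i b - a s i \<le> early_slack I S a i b" if "s \<in> {1..S}" for s i b
    unfolding early_slack_def using pos_max_ge[of "{1..S}" s "\<lambda>s. ylo I i b - a s i"] that by simp
  moreover have "0 \<le> width_excess I S a"
    unfolding width_excess_def by (rule pos_max_nonneg[OF finA])
  moreover have "c i \<in> {1..nwin I i}" if "i \<in> Vdisc I" for i
    using assms(2) that by (auto simp: window_choices_def)
  ultimately show ?thesis
    using assms(3)
    by (auto simp: milp_point_def milp_feasible_def milp_value_def late_slack_def early_slack_def
        pos_max_nonneg sum.delta le_max_iff_disj)
qed

lemma milp_value_le:
  assumes "finite (Vcont I)" "(d, a, mub, mul, z) \<in> milp_feasible I S th R"
  shows "\<exists>c\<in>window_choices I. milp_value I S c a \<le> d"
proof -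
  note feas = assms(2)[unfolded milp_feasible_def mem_Collect_eq case_prod_conv]
  have "\<forall>i\<in>Vdisc I. \<exists>k\<in>{1..nwin I i}. z i k = 1"
    using feas by (blast intro: sum_01_eq_1_imp_ex)
  then obtain c where c: "\<And>i. i \<in> Vdisc I \<Longrightarrow> c i \<in> {1..nwin I i} \<and> z i (c i) = 1"
    by metis
  have "restrict c (Vdisc I) \<in> window_choices I"
    using c by (simp add: window_choices_def)
  moreover have "width_excess I S a \<le> d"
    unfolding width_excess_def using assms(1) feas by (auto simp: pos_max_le_iff)
  moreover have "late_slack I S a i (c i) \<le> mub i" "early_slack I S a i (c i) \<le> mul i"
    if "i \<in> Vdisc I" for i
    using feas c[OF that] that by (auto simp: late_slack_def early_slack_def pos_max_le_iff)
  then have "(\<Sum>i\<in>Vdisc I. late_slack I S a i (c i) + early_slack I S a i (c i))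
      \<le> (\<Sum>i\<in>Vdisc I. mub i + mul i)"
    by (intro sum_mono add_mono)
  ultimately show ?thesis
    using feas by (intro bexI[of _ "restrict c (Vdisc I)"]) (auto simp: milp_value_def)
qed

lemma milp_value_cong:
  "(\<And>s. s \<in> {1..S} \<Longrightarrow> a s = a' s) \<Longrightarrow> milp_value I S c a = milp_value I S c a'"
  unfolding milp_value_def width_excess_def late_slack_def early_slack_def
  by (intro arg_cong2[where f = max] pos_max_cong sum.cong refl arg_cong2[where f = "(+)"]) auto

lemma continuous_on_milp_value:
  "finite (Vcont I) \<Longrightarrow> continuous_on A (milp_value I S c)"
  unfolding milp_value_def width_excess_def late_slack_def early_slack_def
  by (auto simp: case_prod_beta intro!: continuous_intros)

lemma milp_attains_min:
  assumes wf: "wf_inst I"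
    and routes: "\<forall>s\<in>{1..S}. feasible_routes I (th s) (R s) (tw_e I) (tw_l I)"
  shows "\<exists>p\<in>milp_feasible I S th R. \<forall>q\<in>milp_feasible I S th R. fst p \<le> fst q"
proof -
  let ?A = "arrival_profiles I S th R"
  have finite_choices: "finite (window_choices I)"
    using wf_inst_finite[OF wf] by (simp add: window_choices_def finite_PiE)
  have "restrict (\<lambda>_. 1) (Vdisc I) \<in> window_choices I"
    using wf by (auto simp: window_choices_def wf_inst_def)
  then have choices_ne: "window_choices I \<noteq> {}" by blast
  have "\<forall>s\<in>{1..S}. \<exists>x. x \<in> Xset I (th s) (R s) (tw_e I) (tw_l I)"
    using routes by (auto simp: feasible_routes_def)
  then obtain x where x: "\<And>s. s \<in> {1..S} \<Longrightarrow> x s \<in> Xset I (th s) (R s) (tw_e I) (tw_l I)"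
    by metis
  have "(\<lambda>s. if s \<in> {1..S} then x s else (\<lambda>_. 0)) \<in> ?A"
    using x by (simp add: arrival_profiles_def)
  then have profiles_ne: "?A \<noteq> {}" by blast
  obtain c a where c: "c \<in> window_choices I" and a: "a \<in> ?A"
    and min: "\<And>c' a'. c' \<in> window_choices I \<Longrightarrow> a' \<in> ?A \<Longrightarrow> milp_value I S c a \<le> milp_value I S c' a'"
    using continuous_attains_inf_finite_family[OF finite_choices choices_ne
        compact_arrival_profiles profiles_ne, of "milp_value I S"]
      continuous_on_milp_value[OF wf_inst_finite(1)[OF wf]]
    by blast
  have "milp_point I S c a \<in> milp_feasible I S th R"
    using milp_point_feasible[OF wf_inst_finite(1)[OF wf] c] a by (simp add: arrival_profiles_def)
  moreover have "milp_value I S c a \<le> d" if feas: "(d, a', mub, mul, z) \<in> milp_feasible I S th R"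
    for d a' mub mul z
  proof -
    obtain c' where c': "c' \<in> window_choices I" "milp_value I S c' a' \<le> d"
      using milp_value_le[OF wf_inst_finite(1)[OF wf] feas] by blast
    define a'' where "a'' s = (if s \<in> {1..S} then a' s else (\<lambda>_. 0))" for s
    have "a'' \<in> ?A"
      using feas by (simp add: a''_def arrival_profiles_def milp_feasible_def)
    moreover have "milp_value I S c' a'' = milp_value I S c' a'"
      by (rule milp_value_cong) (simp add: a''_def)
    ultimately show ?thesis using min[OF c'(1)] c'(2) by fastforce
  qed
  ultimately show ?thesis
    by (intro bexI[of _ "milp_point I S c a"]) (auto simp: milp_point_def)
qed

definition admits_common_windows :: "vrp_inst \<Rightarrow> nat \<Rightarrow> (nat \<Rightarrow> nat \<Rightarrow> real) \<Rightarrow> bool" where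
  "admits_common_windows I S a \<longleftrightarrow>
     (\<forall>i\<in>Vcont I. \<forall>s1\<in>{1..S}. \<forall>s2\<in>{1..S}. a s1 i - a s2 i \<le> width I i) \<and>
     (\<forall>i\<in>Vdisc I. \<exists>k\<in>{1..nwin I i}. \<forall>s\<in>{1..S}. ylo I i k \<le> a s i \<and> a s i \<le> yhi I i k)"

lemma zero_milp_feasible_iff:
  assumes "finite (Vdisc I)"
  shows "(\<exists>mub mul z. (0, a, mub, mul, z) \<in> milp_feasible I S th R) \<longleftrightarrow>
    (\<forall>s\<in>{1..S}. a s \<in> Xset I (th s) (R s) (tw_e I) (tw_l I)) \<and> admits_common_windows I S a"
proof
  assume "\<exists>mub mul z. (0, a, mub, mul, z) \<in> milp_feasible I S th R"
  then obtain mub mul z where "(0, a, mub, mul, z) \<in> milp_feasible I S th R" by blast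
  note feas = this[unfolded milp_feasible_def mem_Collect_eq case_prod_conv]
  have "\<forall>i\<in>Vdisc I. mub i + mul i = 0"
    using feas sum_nonneg_eq_0_iff[OF assms, of "\<lambda>i. mub i + mul i"]
    by (simp add: sum_nonneg order_antisym)
  then have zero: "mub i = 0" "mul i = 0" if "i \<in> Vdisc I" for i
    using feas that by (auto simp: add_nonneg_eq_0_iff)
  have "\<exists>k\<in>{1..nwin I i}. \<forall>s\<in>{1..S}. ylo I i k \<le> a s i \<and> a s i \<le> yhi I i k"
    if "i \<in> Vdisc I" for i
  proof -
    have "\<exists>k\<in>{1..nwin I i}. z i k = 1"
      using feas that by (blast intro: sum_01_eq_1_imp_ex)
    then obtain k where k: "k \<in> {1..nwin I i}" "z i k = 1" ..
    have "\<forall>s\<in>{1..S}. (z i k = 1 \<longrightarrow> a s i - yhi I i k \<le> mub i) \<and>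
        (z i k = 1 \<longrightarrow> ylo I i k - a s i \<le> mul i)"
      using feas that k(1) by blast
    then show ?thesis using k zero[OF that] by auto
  qed
  then show "(\<forall>s\<in>{1..S}. a s \<in> Xset I (th s) (R s) (tw_e I) (tw_l I)) \<and>
      admits_common_windows I S a"
    using feas by (auto simp: admits_common_windows_def)
next
  assume "(\<forall>s\<in>{1..S}. a s \<in> Xset I (th s) (R s) (tw_e I) (tw_l I)) \<and>
      admits_common_windows I S a"
  then have arrivals: "\<forall>s\<in>{1..S}. a s \<in> Xset I (th s) (R s) (tw_e I) (tw_l I)"
    and cont: "\<forall>i\<in>Vcont I. \<forall>s1\<in>{1..S}. \<forall>s2\<in>{1..S}. a s1 i - a s2 i - width I i \<le> 0"
    and "\<forall>i\<in>Vdisc I. \<exists>k\<in>{1..nwin I i}. \<forall>s\<in>{1..S}. ylo I i k \<le> a s i \<and> a s i \<le> yhi I i k"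
    by (auto simp: admits_common_windows_def)
  then obtain k where k: "\<And>i. i \<in> Vdisc I \<Longrightarrow>
      k i \<in> {1..nwin I i} \<and> (\<forall>s\<in>{1..S}. ylo I i (k i) \<le> a s i \<and> a s i \<le> yhi I i (k i))"
    by metis
  have "(0, a, \<lambda>_. 0, \<lambda>_. 0, \<lambda>i b. if b = k i then 1 else 0) \<in> milp_feasible I S th R"
    using arrivals cont k by (auto simp: milp_feasible_def sum.delta)
  then show "\<exists>mub mul z. (0, a, mub, mul, z) \<in> milp_feasible I S th R" by blast
qed

lemma admits_common_windows_iff:
  assumes wf: "wf_inst I"
    and arrivals: "\<forall>s\<in>{1..S}. a s \<in> Xset I (th s) (R s) (tw_e I) (tw_l I)"
  shows "admits_common_windows I S a \<longleftrightarrow>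
    (\<forall>i\<in>Vcont I. \<forall>\<beta>::real.
        (\<forall>s\<in>{1..S}. a s i \<le> \<beta> + width I i / 2) \<or>
        (\<forall>s\<in>{1..S}. \<beta> - width I i / 2 \<le> a s i)) \<and>
    (\<forall>i\<in>Vdisc I. \<forall>b\<in>{1..nwin I i - 1}.
        (\<forall>s\<in>{1..S}. a s i \<le> yhi I i b) \<or>
        (\<forall>s\<in>{1..S}. ylo I i (b+1) \<le> a s i))"
proof -
  have "(\<exists>k\<in>{1..nwin I i}. \<forall>s\<in>{1..S}. ylo I i k \<le> a s i \<and> a s i \<le> yhi I i k) \<longleftrightarrow>
      (\<forall>b\<in>{1..nwin I i - 1}. (\<forall>s\<in>{1..S}. a s i \<le> yhi I i b) \<or>
        (\<forall>s\<in>{1..S}. ylo I i (b+1) \<le> a s i))"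
    if i: "i \<in> Vdisc I" for i
  proof (rule common_window_iff_one_sided)
    show "ylo I i b \<le> ylo I i (b + 1) \<and> yhi I i b \<le> yhi I i (b + 1)" if "b \<in> {1..<nwin I i}" for b
      using wf i that unfolding wf_inst_def by (meson less_imp_le)
    have "i \<in> customers I" using wf i by (auto simp: wf_inst_def)
    then show "ylo I i 1 \<le> a s i \<and> a s i \<le> yhi I i (nwin I i)" if "s \<in> {1..S}" for s
      using wf i Xset_bounds[OF bspec[OF arrivals that]] unfolding wf_inst_def by metis
    show "1 \<le> nwin I i" using wf i by (auto simp: wf_inst_def)
  qed
  moreover have "(\<forall>s1\<in>{1..S}. \<forall>s2\<in>{1..S}. a s1 i - a s2 i \<le> width I i) \<longleftrightarrow>
      (\<forall>\<beta>::real. (\<forall>s\<in>{1..S}. a s i \<le> \<beta> + width I i / 2) \<or>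
        (\<forall>s\<in>{1..S}. \<beta> - width I i / 2 \<le> a s i))" for i
    by (rule pairwise_diff_le_iff_one_sided)
  ultimately show ?thesis
    unfolding admits_common_windows_def by (simp cong: ball_cong)
qed

lemma milp_feasible_nonneg: "q \<in> milp_feasible I S th R \<Longrightarrow> 0 \<le> fst q"
  by (auto simp: milp_feasible_def)

theorem mainTheorem3:
  fixes I :: vrp_inst and S :: nat and th :: "nat \<Rightarrow> vrp_params"
    and R :: "nat \<Rightarrow> nat list list"
  assumes "wf_inst I"
    and "\<forall>s\<in>{1..S}. params_ok I (th s)"
    and "\<forall>s\<in>{1..S}. feasible_routes I (th s) (R s) (tw_e I) (tw_l I)"
  shows "(\<exists>p\<in>milp_feasible I S th R. \<forall>q\<in>milp_feasible I S th R. fst p \<le> fst q) \<and>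
    ((INF p\<in>milp_feasible I S th R. fst p) = 0 \<longleftrightarrow>
     (\<exists>a :: nat \<Rightarrow> nat \<Rightarrow> real.
        (\<forall>s\<in>{1..S}. a s \<in> Xset I (th s) (R s) (tw_e I) (tw_l I)) \<and>
        (\<forall>i\<in>Vcont I. \<forall>\<beta>::real.
            (\<forall>s\<in>{1..S}. a s i \<le> \<beta> + width I i / 2) \<or>
            (\<forall>s\<in>{1..S}. \<beta> - width I i / 2 \<le> a s i)) \<and>
        (\<forall>i\<in>Vdisc I. \<forall>b\<in>{1..nwin I i - 1}.
            (\<forall>s\<in>{1..S}. a s i \<le> yhi I i b) \<or>
            (\<forall>s\<in>{1..S}. ylo I i (b+1) \<le> a s i))))"
proof -
  let ?M = "milp_feasible I S th R"
  obtain p where p: "p \<in> ?M" "\<forall>q\<in>?M. fst p \<le> fst q"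
    using milp_attains_min[OF assms(1,3)] by blast
  have "(INF q\<in>?M. fst q) = fst p"
    using p by (intro cInf_eq_minimum) auto
  also have "\<dots> = 0 \<longleftrightarrow> (\<exists>a mub mul z. (0, a, mub, mul, z) \<in> ?M)"
    using p milp_feasible_nonneg by (metis antisym fst_conv prod.collapse)
  also have "\<dots> \<longleftrightarrow>
      (\<exists>a. (\<forall>s\<in>{1..S}. a s \<in> Xset I (th s) (R s) (tw_e I) (tw_l I)) \<and> admits_common_windows I S a)"
    using zero_milp_feasible_iff[OF wf_inst_finite(2)[OF assms(1)]] by blast
  also have "\<dots> \<longleftrightarrow> (\<exists>a :: nat \<Rightarrow> nat \<Rightarrow> real.
        (\<forall>s\<in>{1..S}. a s \<in> Xset I (th s) (R s) (tw_e I) (tw_l I)) \<and>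
        (\<forall>i\<in>Vcont I. \<forall>\<beta>::real.
            (\<forall>s\<in>{1..S}. a s i \<le> \<beta> + width I i / 2) \<or>
            (\<forall>s\<in>{1..S}. \<beta> - width I i / 2 \<le> a s i)) \<and>
        (\<forall>i\<in>Vdisc I. \<forall>b\<in>{1..nwin I i - 1}.
            (\<forall>s\<in>{1..S}. a s i \<le> yhi I i b) \<or>
            (\<forall>s\<in>{1..S}. ylo I i (b+1) \<le> a s i)))"
    by (intro ex_cong1 conj_cong refl admits_common_windows_iff[OF assms(1)])
  finally show ?thesis
    using p by blast
qed

end
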